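(* For any $\tau_f\in(\tau_1^i,\tau_2^i)$ there exists a unique $\tau_{pr}=\tau_{pr}(\tau_f)\in(1,\tau_f)$ such that, with $\tau_b=\tau_{pr}(\tau_f)$, $$p'(\tau_b)<\frac{2h(\tau_b)-2h(\tau_f)}{\tau_b^2-\tau_f^2}=p'(\tau_f)$$ and Liu's extended entropy condition $\frac{2h(\tau_f)-2h(\tau_b)}{\tau_f^2-\tau_b^2}<\frac{2h(\tau_f)-2h(\tau)}{\tau_f^2-\tau^2}$ for all $\tau\in(\tau_b,\tau_f)$ hold. Moreover, $\frac{d\tau_{pr}}{d\tau_f}<0$ for $\tau_f\in(\tau_1^i,\tau_2^i)$.
   Context: The pressure is $p(\tau)=\frac{\mathcal S}{(\tau-1)^\gamma}-\frac{1}{\tau^2}$ for $\tau>1$, with constants $1<\gamma<2$, $\mathcal S>0$, assumed such that there exist $1<\tau_1^i<\tau_2^i$ with $p'<0$ on $(1,\infty)$, $p''>0$ on $(1,\tau_1^i)\cup(\tau_2^i,\infty)$, $p''<0$ on $(\tau_1^i,\tau_2^i)$. The function $h$ satisfies $h'(\tau)=\tau p'(\tau)$. *)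

theory Defs
  imports "HOL-Analysis.Analysis"
begin

definition pres :: "real \<Rightarrow> real \<Rightarrow> real \<Rightarrow> real" where
  "pres S \<gamma> \<tau> = S / (\<tau> - 1) powr \<gamma> - 1 / \<tau>^2"

definition chord :: "(real \<Rightarrow> real) \<Rightarrow> real \<Rightarrow> real \<Rightarrow> real" where
  "chord h a b = (2 * h a - 2 * h b) / (a^2 - b^2)"

definition pr_cond :: "(real \<Rightarrow> real) \<Rightarrow> (real \<Rightarrow> real) \<Rightarrow> real \<Rightarrow> real \<Rightarrow> bool" where
  "pr_cond p h \<tau>f \<tau>b \<longleftrightarrow>
     deriv p \<tau>b < chord h \<tau>b \<tau>f \<and> chord h \<tau>b \<tau>f = deriv p \<tau>f \<and>
     (\<forall>\<tau>\<in>{\<tau>b<..<\<tau>f}. chord h \<tau>f \<tau>b < chord h \<tau>f \<tau>)"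

end

theory Submission
  imports Defs "HOL-Real_Asymp.Real_Asymp"
begin

(* Put E(f, b) = h(f) - h(b) - p'(f) (f^2 - b^2) / 2, so that the chord slope between b and f is
   p'(f) + 2 E(f, b) / (f^2 - b^2).  For fixed f in (tau_1, tau_2), dE/db = b (p'(f) - p'(b)).
   As p' tends to -infinity at 1, increases up to tau_1 and decreases after it, p' - p'(f) changes
   sign exactly once on (1, f), at some c < tau_1.  So E(f, .) increases on (1, c] and decreases on
   [c, f] to E(f, f) = 0, while E(f, b) tends to -infinity as b tends to 1 because h does.  Hence
   E(f, .) has a unique zero b0 < c, negative before it and positive after it: the chord condition
   is E(f, b0) = 0, p'(b0) < p'(f) because b0 < c, and positivity of E(f, .) on (b0, f) is Liu's
   entropy condition.  Implicit differentiation of E(f, tau_pr(f)) = 0 gives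
   tau_pr' = - (dE/df) / (dE/db) < 0, since dE/db = b (p'(f) - p'(b)) > 0 at b0 and
   dE/df = - p''(f) (f^2 - b^2) / 2 > 0 on the concave part of p. *)

lemma chord_commute: "chord h a b = chord h b a"
  unfolding chord_def by (metis minus_diff_eq minus_divide_divide)

lemma isCont_sign_change_point:
  fixes F :: "real \<Rightarrow> real \<Rightarrow> real"
  assumes "a < \<beta> \<xi>" "\<beta> \<xi> < c"
    and sign: "\<forall>\<^sub>F x in nhds \<xi>. \<forall>y\<in>{a<..<c}. sgn (F x y) = sgn (y - \<beta> x)"
    and cont: "\<And>y. a < y \<Longrightarrow> y < c \<Longrightarrow> isCont (\<lambda>x. F x y) \<xi>"
  shows "isCont \<beta> \<xi>"
  unfolding isCont_def tendsto_iff
proof (intro allI impI)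
  fix e :: real assume "0 < e"
  define d where "d = min e (min (\<beta> \<xi> - a) (c - \<beta> \<xi>)) / 2"
  have "0 < 2 * d" "2 * d \<le> e" "2 * d \<le> \<beta> \<xi> - a" "2 * d \<le> c - \<beta> \<xi>"
    using assms(1,2) \<open>0 < e\<close> by (auto simp: d_def)
  then have d: "0 < d" "d < e" "a < \<beta> \<xi> - d" "\<beta> \<xi> + d < c"
    by linarith+
  have "sgn (F \<xi> (\<beta> \<xi> - d)) = -1" "sgn (F \<xi> (\<beta> \<xi> + d)) = 1"
    using eventually_nhds_x_imp_x[OF sign] d by auto
  then have "F \<xi> (\<beta> \<xi> - d) < 0" "0 < F \<xi> (\<beta> \<xi> + d)"
    by (simp_all add: sgn_1_neg sgn_1_pos)
  then have "\<forall>\<^sub>F x in at \<xi>. F x (\<beta> \<xi> - d) < 0" "\<forall>\<^sub>F x in at \<xi>. 0 < F x (\<beta> \<xi> + d)"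
    using cont[of "\<beta> \<xi> - d"] cont[of "\<beta> \<xi> + d"] d
    by (auto simp: isCont_def intro: order_tendstoD)
  moreover have "\<forall>\<^sub>F x in at \<xi>. \<forall>y\<in>{a<..<c}. sgn (F x y) = sgn (y - \<beta> x)"
    using sign by (simp add: eventually_at_filter eventually_mono)
  ultimately show "\<forall>\<^sub>F x in at \<xi>. dist (\<beta> x) (\<beta> \<xi>) < e"
  proof eventually_elim
    case (elim x)
    have "\<beta> \<xi> - d \<in> {a<..<c}" "\<beta> \<xi> + d \<in> {a<..<c}"
      using d by auto
    then have "sgn (\<beta> \<xi> - d - \<beta> x) = -1" "sgn (\<beta> \<xi> + d - \<beta> x) = 1"
      using elim(3) sgn_neg[OF elim(1)] sgn_pos[OF elim(2)] by simp_all
    then show ?case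
      using d by (auto simp: dist_real_def sgn_1_neg sgn_1_pos)
  qed
qed

(* Q is a Caratheodory slope of F in its second argument, so F need not be jointly differentiable. *)
lemma has_real_derivative_implicit:
  fixes F Q :: "real \<Rightarrow> real \<Rightarrow> real"
  assumes zero: "\<forall>\<^sub>F x in at \<xi>. F x (\<beta> x) = 0" "F \<xi> (\<beta> \<xi>) = 0"
    and slope: "\<And>x y. F x y - F x (\<beta> \<xi>) = Q x y * (y - \<beta> \<xi>)"
    and Q: "isCont (\<lambda>x. Q x (\<beta> x)) \<xi>" "Q \<xi> (\<beta> \<xi>) \<noteq> 0"
    and D: "((\<lambda>x. F x (\<beta> \<xi>)) has_real_derivative D) (at \<xi>)"
  shows "(\<beta> has_real_derivative - D / Q \<xi> (\<beta> \<xi>)) (at \<xi>)"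
proof -
  let ?dq = "\<lambda>x. (F x (\<beta> \<xi>) - F \<xi> (\<beta> \<xi>)) / (x - \<xi>)"
  have lim: "((\<lambda>x. - ?dq x / Q x (\<beta> x)) \<longlongrightarrow> - D / Q \<xi> (\<beta> \<xi>)) (at \<xi>)"
    using D Q by (intro tendsto_intros) (auto simp: has_field_derivative_iff isCont_def)
  have "\<forall>\<^sub>F x in at \<xi>. Q x (\<beta> x) \<noteq> 0"
    using Q by (simp add: isCont_def tendsto_imp_eventually_ne)
  moreover have "\<forall>\<^sub>F x in at \<xi>. x \<noteq> \<xi>"
    by (simp add: eventually_at_filter)
  ultimately have "\<forall>\<^sub>F x in at \<xi>. - ?dq x / Q x (\<beta> x) = (\<beta> x - \<beta> \<xi>) / (x - \<xi>)"
    using zero(1)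
  proof eventually_elim
    case (elim x)
    then show ?case using slope[of x "\<beta> x"] zero(2) by (simp add: field_simps)
  qed
  with lim show ?thesis
    by (simp add: has_field_derivative_iff Lim_transform_eventually)
qed

(* The explicit pressure law enters the argument only through the two limits at 1. *)
locale inflected_pressure =
  fixes p h :: "real \<Rightarrow> real" and \<tau>1 \<tau>2 :: real
  assumes one_less_\<tau>1: "1 < \<tau>1"
    and has_derivative_p': "\<And>t. 1 < t \<Longrightarrow> (deriv p has_real_derivative deriv (deriv p) t) (at t)"
    and p''_pos: "\<And>t. 1 < t \<Longrightarrow> t < \<tau>1 \<Longrightarrow> 0 < deriv (deriv p) t"
    and p''_neg: "\<And>t. \<tau>1 < t \<Longrightarrow> t < \<tau>2 \<Longrightarrow> deriv (deriv p) t < 0"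
    and has_derivative_h: "\<And>t. 1 < t \<Longrightarrow> (h has_real_derivative t * deriv p t) (at t)"
    and p'_at_bot: "filterlim (deriv p) at_bot (at_right 1)"
    and h_at_top: "filterlim h at_top (at_right 1)"
begin

abbreviation p' :: "real \<Rightarrow> real" where "p' \<equiv> deriv p"

lemma isCont_p': "1 < t \<Longrightarrow> isCont p' t"
  using has_derivative_p' DERIV_isCont by blast

lemma continuous_on_p': "1 < x \<Longrightarrow> continuous_on {x..y} p'"
  by (intro continuous_at_imp_continuous_on ballI isCont_p') auto

lemma p'_strict_mono:
  assumes "1 < x" "x < y" "y \<le> \<tau>1"
  shows "p' x < p' y"
proof (rule DERIV_pos_imp_increasing_open[OF assms(2)])
  fix z assume "x < z" "z < y"
  with assms show "\<exists>d. (p' has_real_derivative d) (at z) \<and> 0 < d"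
    by (intro exI[of _ "deriv (deriv p) z"] conjI has_derivative_p' p''_pos) auto
qed (use assms continuous_on_p' in auto)

lemma p'_strict_antimono:
  assumes "\<tau>1 \<le> x" "x < y" "y \<le> \<tau>2"
  shows "p' y < p' x"
proof (rule DERIV_neg_imp_decreasing_open[OF assms(2)])
  fix z assume "x < z" "z < y"
  with assms one_less_\<tau>1 show "\<exists>d. (p' has_real_derivative d) (at z) \<and> d < 0"
    by (intro exI[of _ "deriv (deriv p) z"] conjI has_derivative_p' p''_neg) auto
qed (use assms one_less_\<tau>1 continuous_on_p' in auto)

lemma p'_crossing:
  assumes "\<tau>1 < f" "f < \<tau>2"
  obtains c where "1 < c" "c < f"
    "\<And>b. 1 < b \<Longrightarrow> b < c \<Longrightarrow> p' b < p' f" "\<And>b. c < b \<Longrightarrow> b < f \<Longrightarrow> p' f < p' b"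
proof -
  have "\<forall>\<^sub>F b in at_right 1. p' b < p' f"
    using p'_at_bot by (simp add: filterlim_at_bot_dense)
  moreover have "\<forall>\<^sub>F b in at_right 1. b \<in> {1<..<\<tau>1}"
    by (rule eventually_at_right_real) (rule one_less_\<tau>1)
  ultimately have "\<forall>\<^sub>F b in at_right 1. p' b < p' f \<and> b \<in> {1<..<\<tau>1}"
    by (rule eventually_conj)
  then obtain b where b: "p' b < p' f" "1 < b" "b < \<tau>1"
    using eventually_happens'[OF trivial_limit_at_right_real] by auto
  have "p' f < p' \<tau>1"
    using p'_strict_antimono assms by simp
  have "\<exists>c\<ge>b. c \<le> \<tau>1 \<and> p' c = p' f"
    using b \<open>p' f < p' \<tau>1\<close> by (intro IVT' continuous_on_p') auto
  then obtain c where c: "b \<le> c" "c \<le> \<tau>1" "p' c = p' f"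
    by blast
  have "c \<noteq> b" "c \<noteq> \<tau>1"
    using b(1) c(3) \<open>p' f < p' \<tau>1\<close> by auto
  with c have "b < c" "c < \<tau>1"
    by linarith+
  show ?thesis
  proof
    show "1 < c" "c < f" using b \<open>b < c\<close> \<open>c < \<tau>1\<close> assms by auto
    show "p' b' < p' f" if "1 < b'" "b' < c" for b'
      using p'_strict_mono[of b' c] that c by simp
    show "p' f < p' b'" if "c < b'" "b' < f" for b'
    proof (cases "b' \<le> \<tau>1")
      case True
      then show ?thesis using p'_strict_mono[of c b'] that b \<open>b < c\<close> c(3) by simp
    next
      case False
      then show ?thesis using p'_strict_antimono[of b' f] that assms by simp
    qed
  qed
qed

definition chord_excess :: "real \<Rightarrow> real \<Rightarrow> real" where
  "chord_excess f b = h f - h b - p' f * (f^2 - b^2) / 2"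

lemma chord_eq_chord_excess:
  assumes "0 < b" "b < f"
  shows "chord h f b = p' f + 2 * chord_excess f b / (f^2 - b^2)"
proof -
  have "b^2 < f^2" using assms by (simp add: power_strict_mono)
  then show ?thesis by (simp add: chord_def chord_excess_def field_simps)
qed

lemma has_real_derivative_chord_excess_back:
  "1 < b \<Longrightarrow> (chord_excess f has_real_derivative b * (p' f - p' b)) (at b)"
  unfolding chord_excess_def[abs_def]
  by (auto intro!: derivative_eq_intros has_derivative_h simp: algebra_simps)

lemma has_real_derivative_chord_excess_front:
  "1 < f \<Longrightarrow>
    ((\<lambda>x. chord_excess x b) has_real_derivative - deriv (deriv p) f * (f^2 - b^2) / 2) (at f)"
  unfolding chord_excess_def
  by (auto intro!: derivative_eq_intros has_derivative_h has_derivative_p' simp: field_simps)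

lemma continuous_on_chord_excess: "1 < x \<Longrightarrow> continuous_on {x..y} (chord_excess f)"
  using DERIV_isCont[OF has_real_derivative_chord_excess_back]
  by (intro continuous_at_imp_continuous_on) auto

lemma chord_excess_at_bot: "filterlim (chord_excess f) at_bot (at_right 1)"
proof -
  have "((\<lambda>b. h f - p' f * (f^2 - b^2) / 2) \<longlongrightarrow> h f - p' f * (f^2 - 1) / 2) (at_right 1)"
    by (intro tendsto_eq_intros) auto
  moreover have "filterlim (\<lambda>b. - h b) at_bot (at_right 1)"
    using h_at_top by (simp add: filterlim_uminus_at_bot)
  ultimately have "filterlim (\<lambda>b. (h f - p' f * (f^2 - b^2) / 2) + - h b) at_bot (at_right 1)"
    by (subst filterlim_tendsto_add_at_bot_iff)
  then show ?thesis
    by (simp add: chord_excess_def[abs_def] algebra_simps)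
qed

lemma chord_excess_sign:
  assumes "\<tau>1 < f" "f < \<tau>2"
  obtains b0 where "1 < b0" "b0 < f" "p' b0 < p' f"
    "\<And>b. 1 < b \<Longrightarrow> b < f \<Longrightarrow> sgn (chord_excess f b) = sgn (b - b0)"
proof -
  obtain c where c: "1 < c" "c < f"
    "\<And>b. 1 < b \<Longrightarrow> b < c \<Longrightarrow> p' b < p' f" "\<And>b. c < b \<Longrightarrow> b < f \<Longrightarrow> p' f < p' b"
    using p'_crossing assms by blast
  have incr: "chord_excess f x < chord_excess f y" if "1 < x" "x < y" "y \<le> c" for x y
  proof (rule DERIV_pos_imp_increasing_open[OF \<open>x < y\<close>])
    fix z assume "x < z" "z < y"
    with that c show "\<exists>d. (chord_excess f has_real_derivative d) (at z) \<and> 0 < d"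
      by (intro exI[of _ "z * (p' f - p' z)"] conjI has_real_derivative_chord_excess_back) auto
  qed (use that continuous_on_chord_excess in auto)
  have decr: "chord_excess f y < chord_excess f x" if "c \<le> x" "x < y" "y \<le> f" for x y
  proof (rule DERIV_neg_imp_decreasing_open[OF \<open>x < y\<close>])
    fix z assume "x < z" "z < y"
    with that c show "\<exists>d. (chord_excess f has_real_derivative d) (at z) \<and> d < 0"
      by (intro exI[of _ "z * (p' f - p' z)"] conjI has_real_derivative_chord_excess_back)
        (auto simp: mult_pos_neg)
  qed (use that c continuous_on_chord_excess in auto)
  have pos: "0 < chord_excess f b" if "c \<le> b" "b < f" for b
    using decr[OF that order.refl] by (simp add: chord_excess_def)
  have "\<forall>\<^sub>F b in at_right 1. chord_excess f b < 0"
    using chord_excess_at_bot by (simp add: filterlim_at_bot_dense)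
  moreover have "\<forall>\<^sub>F b in at_right 1. b \<in> {1<..<c}"
    by (rule eventually_at_right_real) (rule c(1))
  ultimately have "\<forall>\<^sub>F b in at_right 1. chord_excess f b < 0 \<and> b \<in> {1<..<c}"
    by (rule eventually_conj)
  then obtain bs where bs: "chord_excess f bs < 0" "1 < bs" "bs < c"
    using eventually_happens'[OF trivial_limit_at_right_real] by auto
  have "0 < chord_excess f c"
    using pos c by simp
  have "\<exists>b0\<ge>bs. b0 \<le> c \<and> chord_excess f b0 = 0"
    using bs \<open>0 < chord_excess f c\<close> by (intro IVT' continuous_on_chord_excess) auto
  then obtain b0 where b0: "bs \<le> b0" "b0 \<le> c" "chord_excess f b0 = 0"
    by blast
  have "b0 \<noteq> bs" "b0 \<noteq> c"
    using b0(3) bs(1) \<open>0 < chord_excess f c\<close> by auto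
  with b0 have "bs < b0" "b0 < c"
    by linarith+
  show ?thesis
  proof
    show "1 < b0" "b0 < f" "p' b0 < p' f" using bs \<open>bs < b0\<close> \<open>b0 < c\<close> c by auto
    show "sgn (chord_excess f b) = sgn (b - b0)" if "1 < b" "b < f" for b
    proof (cases b b0 rule: linorder_cases)
      case less
      then show ?thesis using incr[of b b0] that b0 \<open>b0 < c\<close> by simp
    next
      case equal
      then show ?thesis using b0 by simp
    next
      case greater
      have "0 < chord_excess f b"
      proof (cases "b \<le> c")
        case True
        then show ?thesis using incr[of b0 b] greater b0 bs \<open>bs < b0\<close> by simp
      next
        case False
        then show ?thesis using pos[of b] that by simp
      qed
      then show ?thesis using greater by simp
    qed
  qed
qed

lemma pr_cond_iff_chord_excess_eq_0:
  assumes f: "\<tau>1 < f" "f < \<tau>2" and b: "1 < b" "b < f"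
  shows "pr_cond p h f b \<longleftrightarrow> chord_excess f b = 0"
proof -
  have chord_b: "chord h b f = p' f + 2 * chord_excess f b / (f^2 - b^2)"
    using chord_eq_chord_excess[of b f] chord_commute[of h b f] b by simp
  have "b^2 < f^2" using b by (simp add: power_strict_mono)
  show ?thesis
  proof
    assume "pr_cond p h f b"
    then show "chord_excess f b = 0"
      using chord_b \<open>b^2 < f^2\<close> by (simp add: pr_cond_def)
  next
    assume zero: "chord_excess f b = 0"
    obtain b0 where b0: "p' b0 < p' f"
      "\<And>b. 1 < b \<Longrightarrow> b < f \<Longrightarrow> sgn (chord_excess f b) = sgn (b - b0)"
      using chord_excess_sign f by blast
    then have "b = b0" using zero b by (metis sgn_0_0 right_minus_eq)
    have "chord h f b < chord h f t" if "b < t" "t < f" for t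
    proof -
      have "0 < chord_excess f t" using b0(2)[of t] that b \<open>b = b0\<close> by (simp add: sgn_1_pos)
      moreover have "t^2 < f^2" using that b by (simp add: power_strict_mono)
      ultimately show ?thesis
        using chord_eq_chord_excess[of t f] chord_eq_chord_excess[of b f] that b zero by simp
    qed
    then show "pr_cond p h f b"
      using chord_b zero b0(1) \<open>b = b0\<close> by (simp add: pr_cond_def)
  qed
qed

definition \<tau>pr :: "real \<Rightarrow> real" where
  "\<tau>pr = (\<lambda>f. THE b. b \<in> {1<..<f} \<and> pr_cond p h f b)"

lemma pr_cond_iff_eq_\<tau>pr:
  assumes "\<tau>1 < f" "f < \<tau>2"
  shows "b \<in> {1<..<f} \<and> pr_cond p h f b \<longleftrightarrow> b = \<tau>pr f"
proof -
  obtain b0 where b0: "1 < b0" "b0 < f"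
    "\<And>b. 1 < b \<Longrightarrow> b < f \<Longrightarrow> sgn (chord_excess f b) = sgn (b - b0)"
    using chord_excess_sign assms by blast
  have "chord_excess f b = 0 \<longleftrightarrow> b = b0" if "1 < b" "b < f" for b
    using b0(3)[OF that] by (metis eq_iff_diff_eq_0 sgn_eq_0_iff)
  then have iff: "b \<in> {1<..<f} \<and> pr_cond p h f b \<longleftrightarrow> b = b0" for b
    using pr_cond_iff_chord_excess_eq_0[OF assms, of b] b0(1,2) by auto
  then have "\<tau>pr f = b0"
    by (simp add: \<tau>pr_def)
  with iff show ?thesis
    by simp
qed

lemma \<tau>pr_sign:
  assumes "\<tau>1 < f" "f < \<tau>2"
  shows "1 < \<tau>pr f" "\<tau>pr f < f" "p' (\<tau>pr f) < p' f"
    and "\<And>b. 1 < b \<Longrightarrow> b < f \<Longrightarrow> sgn (chord_excess f b) = sgn (b - \<tau>pr f)"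
proof -
  obtain b0 where b0: "1 < b0" "b0 < f" "p' b0 < p' f"
    "\<And>b. 1 < b \<Longrightarrow> b < f \<Longrightarrow> sgn (chord_excess f b) = sgn (b - b0)"
    using chord_excess_sign assms by blast
  then have "chord_excess f b0 = 0"
    by (metis sgn_eq_0_iff diff_self)
  then have "\<tau>pr f = b0"
    using pr_cond_iff_eq_\<tau>pr[OF assms, of b0] pr_cond_iff_chord_excess_eq_0[OF assms b0(1,2)] b0 by simp
  with b0 show "1 < \<tau>pr f" "\<tau>pr f < f" "p' (\<tau>pr f) < p' f"
    "\<And>b. 1 < b \<Longrightarrow> b < f \<Longrightarrow> sgn (chord_excess f b) = sgn (b - \<tau>pr f)"
    by simp_all
qed

lemma isCont_\<tau>pr:
  assumes f0: "\<tau>1 < f0" "f0 < \<tau>2"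
  shows "isCont \<tau>pr f0"
proof (rule isCont_sign_change_point[where F = chord_excess])
  define c where "c = (\<tau>pr f0 + f0) / 2"
  show "1 < \<tau>pr f0" "\<tau>pr f0 < c"
    using \<tau>pr_sign(1,2)[OF f0] by (auto simp: c_def)
  have "\<forall>\<^sub>F f in nhds f0. f \<in> {max \<tau>1 c<..<\<tau>2}"
    using f0 \<tau>pr_sign(2)[OF f0] by (intro eventually_nhds_in_open) (auto simp: c_def)
  then show "\<forall>\<^sub>F f in nhds f0. \<forall>b\<in>{1<..<c}. sgn (chord_excess f b) = sgn (b - \<tau>pr f)"
    by eventually_elim (auto intro: \<tau>pr_sign(4))
  show "isCont (\<lambda>f. chord_excess f b) f0" if "1 < b" for b
    using DERIV_isCont[OF has_real_derivative_chord_excess_front] f0 one_less_\<tau>1 by simp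
qed

lemma \<tau>pr_has_negative_derivative:
  assumes f0: "\<tau>1 < f0" "f0 < \<tau>2"
  shows "\<exists>D. (\<tau>pr has_real_derivative D) (at f0) \<and> D < 0"
proof -
  define b0 where "b0 = \<tau>pr f0"
  have b0: "1 < b0" "b0 < f0" "p' b0 < p' f0"
    using \<tau>pr_sign[OF f0] by (simp_all add: b0_def)
  obtain s where s: "\<And>z. h z - h b0 = s z * (z - b0)" "isCont s b0" "s b0 = b0 * p' b0"
    using CARAT_DERIV has_derivative_h[OF b0(1)] by blast
  define Q where "Q f b = p' f * (b + b0) / 2 - s b" for f b
  have slope: "chord_excess f b - chord_excess f b0 = Q f b * (b - b0)" for f b
    using s(1)[of b] by (simp add: chord_excess_def Q_def field_simps power2_eq_square)
  have Q_cont: "isCont (\<lambda>f. Q f (\<tau>pr f)) f0"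
    unfolding Q_def using isCont_\<tau>pr[OF f0] isCont_o2[OF isCont_\<tau>pr[OF f0] s(2)[unfolded b0_def]]
      isCont_p' f0 one_less_\<tau>1 by (intro continuous_intros) auto
  have Q_pos: "0 < Q f0 b0"
    using b0 by (simp add: Q_def s(3) field_simps)
  have "\<forall>\<^sub>F f in nhds f0. f \<in> {\<tau>1<..<\<tau>2}"
    using f0 by (intro eventually_nhds_in_open) auto
  then have zero: "\<forall>\<^sub>F f in at f0. chord_excess f (\<tau>pr f) = 0"
    unfolding eventually_at_filter
    by eventually_elim (use \<tau>pr_sign(1,2,4) in \<open>force simp: sgn_eq_0_iff\<close>)
  have zero0: "chord_excess f0 b0 = 0"
    using \<tau>pr_sign(4)[OF f0, of b0] b0 by (simp add: b0_def sgn_eq_0_iff)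
  define D where "D = - deriv (deriv p) f0 * (f0^2 - b0^2) / 2"
  have "b0^2 < f0^2"
    using b0 by (simp add: power_strict_mono)
  then have "0 < D"
    using p''_neg[OF f0] by (simp add: D_def mult_neg_pos)
  have front: "((\<lambda>f. chord_excess f b0) has_real_derivative D) (at f0)"
    unfolding D_def using f0 one_less_\<tau>1 by (intro has_real_derivative_chord_excess_front) simp
  have "(\<tau>pr has_real_derivative - D / Q f0 b0) (at f0)"
    using Q_pos by (intro has_real_derivative_implicit[where \<beta> = \<tau>pr and \<xi> = f0, folded b0_def,
        OF zero zero0 slope Q_cont _ front]) simp
  moreover have "- D / Q f0 b0 < 0"
    using \<open>0 < D\<close> Q_pos by (simp add: divide_pos_pos)
  ultimately show ?thesis
    by blast
qed

end

lemma pres_eq: "pres S \<gamma> = (\<lambda>t. S * (t - 1) powr (- \<gamma>) - 1 / t^2)"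
  by (simp add: fun_eq_iff pres_def powr_minus divide_inverse)

lemma has_real_derivative_pres:
  assumes "1 < t"
  shows "(pres S \<gamma> has_real_derivative - \<gamma> * S * (t - 1) powr (- \<gamma> - 1) + 2 / t^3) (at t)"
  unfolding pres_eq using assms
  by (auto intro!: derivative_eq_intros simp: power2_eq_square power3_eq_cube field_simps)

lemma deriv_pres:
  "1 < t \<Longrightarrow> deriv (pres S \<gamma>) t = - \<gamma> * S * (t - 1) powr (- \<gamma> - 1) + 2 / t^3"
  using has_real_derivative_pres DERIV_imp_deriv by blast

lemma has_real_derivative_deriv_pres:
  assumes "1 < t"
  shows "(deriv (pres S \<gamma>) has_real_derivative deriv (deriv (pres S \<gamma>)) t) (at t)"
proof -
  have "(deriv (pres S \<gamma>) has_real_derivative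
          \<gamma> * (\<gamma> + 1) * S * (t - 1) powr (- \<gamma> - 2) - 6 / t^4) (at t)"
  proof (rule has_field_derivative_transform_within_open[where S = "{1<..}"])
    show "((\<lambda>x. - \<gamma> * S * (x - 1) powr (- \<gamma> - 1) + 2 / x^3) has_real_derivative
            \<gamma> * (\<gamma> + 1) * S * (t - 1) powr (- \<gamma> - 2) - 6 / t^4) (at t)"
      using assms by (auto intro!: derivative_eq_intros simp: eval_nat_numeral field_simps)
  qed (use assms deriv_pres in auto)
  then show ?thesis
    using DERIV_deriv_iff_real_differentiable real_differentiable_def by blast
qed

lemma filterlim_deriv_pres_at_bot:
  assumes "0 < \<gamma>" "0 < S"
  shows "filterlim (deriv (pres S \<gamma>)) at_bot (at_right 1)"
proof -
  have "filterlim (\<lambda>t. - \<gamma> * S * (t - 1) powr (- \<gamma> - 1) + 2 / t^3) at_bot (at_right 1)"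
    using assms by real_asymp
  moreover have "\<forall>\<^sub>F t in at_right 1. - \<gamma> * S * (t - 1) powr (- \<gamma> - 1) + 2 / t^3 = deriv (pres S \<gamma>) t"
    using eventually_at_right_less[of 1] by eventually_elim (simp add: deriv_pres)
  ultimately show ?thesis using filterlim_cong by fastforce
qed

lemma filterlim_enthalpy_at_top:
  assumes "0 < \<gamma>" "0 < S"
    and h: "\<And>t. 1 < t \<Longrightarrow> (h has_real_derivative t * deriv (pres S \<gamma>) t) (at t)"
  shows "filterlim h at_top (at_right 1)"
proof -
  define k where "k x = h x - S * (x - 1) powr (- \<gamma>) - 2 * x" for x
  have k_le: "k 2 \<le> k b" if "1 < b" "b \<le> 2" for b
  proof (rule DERIV_nonpos_imp_nonincreasing[OF \<open>b \<le> 2\<close>])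
    fix x assume x: "b \<le> x" "x \<le> 2"
    then have "1 < x" using that by simp
    define c where "c = \<gamma> * S * (x - 1) powr (- \<gamma> - 1)"
    have "(k has_real_derivative x * deriv (pres S \<gamma>) x - S * (- \<gamma> * (x - 1) powr (- \<gamma> - 1)) - 2) (at x)"
      unfolding k_def[abs_def] using \<open>1 < x\<close>
      by (auto intro!: derivative_eq_intros h)
    moreover have "x * deriv (pres S \<gamma>) x - S * (- \<gamma> * (x - 1) powr (- \<gamma> - 1)) - 2
        = - ((x - 1) * c) + 2 / x^2 - 2"
      using \<open>1 < x\<close> by (simp add: deriv_pres c_def field_simps power2_eq_square power3_eq_cube)
    moreover have "0 \<le> (x - 1) * c" "2 / x^2 \<le> 2"
      using \<open>1 < x\<close> assms by (simp_all add: c_def field_simps)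
    ultimately show "\<exists>y. (k has_real_derivative y) (at x) \<and> y \<le> 0"
      by (intro exI conjI) auto
  qed
  have "filterlim (\<lambda>b. k 2 + S * (b - 1) powr (- \<gamma>)) at_top (at_right 1)"
    using assms by real_asymp
  moreover have "\<forall>\<^sub>F b in at_right 1. b \<in> {1<..<2::real}"
    by (rule eventually_at_right_real) simp
  then have "\<forall>\<^sub>F b in at_right 1. k 2 + S * (b - 1) powr (- \<gamma>) \<le> h b"
    by eventually_elim (use k_le in \<open>force simp: k_def\<close>)
  ultimately show ?thesis by (rule filterlim_at_top_mono)
qed

theorem proposition3p5:
  fixes S \<gamma> \<tau>1 \<tau>2 :: real and h :: "real \<Rightarrow> real"
  assumes "1 < \<gamma>" "\<gamma> < 2" "0 < S"
    and "1 < \<tau>1" "\<tau>1 < \<tau>2"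
    and "\<forall>\<tau>>1. deriv (pres S \<gamma>) \<tau> < 0"
    and "\<forall>\<tau>\<in>{1<..<\<tau>1} \<union> {\<tau>2<..}. deriv (deriv (pres S \<gamma>)) \<tau> > 0"
    and "\<forall>\<tau>\<in>{\<tau>1<..<\<tau>2}. deriv (deriv (pres S \<gamma>)) \<tau> < 0"
    and "\<forall>\<tau>>1. (h has_real_derivative \<tau> * deriv (pres S \<gamma>) \<tau>) (at \<tau>)"
  shows "(\<forall>\<tau>f\<in>{\<tau>1<..<\<tau>2}. \<exists>!\<tau>b. \<tau>b \<in> {1<..<\<tau>f} \<and> pr_cond (pres S \<gamma>) h \<tau>f \<tau>b)
    \<and> (let \<tau>pr = (\<lambda>\<tau>f. THE \<tau>b. \<tau>b \<in> {1<..<\<tau>f} \<and> pr_cond (pres S \<gamma>) h \<tau>f \<tau>b)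
       in \<forall>\<tau>f\<in>{\<tau>1<..<\<tau>2}. \<exists>D. (\<tau>pr has_real_derivative D) (at \<tau>f) \<and> D < 0)"
proof -
  interpret inflected_pressure "pres S \<gamma>" h \<tau>1 \<tau>2
  proof
    show "1 < \<tau>1"
      using assms(4) .
    show "(deriv (pres S \<gamma>) has_real_derivative deriv (deriv (pres S \<gamma>)) t) (at t)" if "1 < t" for t
      using that by (rule has_real_derivative_deriv_pres)
    show "0 < deriv (deriv (pres S \<gamma>)) t" if "1 < t" "t < \<tau>1" for t
      using assms(7) that by simp
    show "deriv (deriv (pres S \<gamma>)) t < 0" if "\<tau>1 < t" "t < \<tau>2" for t
      using assms(8) that by simp
    show "(h has_real_derivative t * deriv (pres S \<gamma>) t) (at t)" if "1 < t" for t
      using assms(9) that by simp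
    show "filterlim (deriv (pres S \<gamma>)) at_bot (at_right 1)"
      using assms(1,3) by (intro filterlim_deriv_pres_at_bot) auto
    show "filterlim h at_top (at_right 1)"
      using assms(1,3,9) by (intro filterlim_enthalpy_at_top[of \<gamma> S]) auto
  qed
  show ?thesis
    unfolding Let_def \<tau>pr_def[symmetric]
    using pr_cond_iff_eq_\<tau>pr \<tau>pr_has_negative_derivative by (metis greaterThanLessThan_iff)
qed

end
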